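(* Let $\rho=(r,U)$ be a universally quantified rule, let $(\pi\colon L\to\overline L,\gamma\colon\overline L\rightharpoonup\overline R)$ be an instantiation of $\rho$, let $u\in U$ and let $(\pi,\gamma)\oplus u=(p_u'\circ\pi,\eta)$ with $\eta\colon\overline L_u\rightharpoonup\overline R_u$. Then there exist subgraph morphisms $\mu_u'\colon\overline L_u\rightharpoonup\overline L$ and $\mu_u''\colon\overline R_u\rightharpoonup\overline R$ such that $\gamma\circ\mu_u'=\mu_u''\circ\eta$.
   Context: Fix a finite label set $\Lambda$ with arity function $\mathrm{ar}\colon\Lambda\to\mathbb N$. A (hyper)graph $G=(V_G,E_G,c_G,l_G)$ consists of finite sets $V_G$ (nodes) and $E_G$ (edges), a connection function $c_G\colon E_G\to V_G^*$ and a labelling $l_G\colon E_G\to\Lambda$ with $|c_G(e)|=\mathrm{ar}(l_G(e))$; an edge $e$ is incident to a node $v$ if $v$ occurs in $c_G(e)$. A morphism $\phi\colon G\rightharpoonup G'$ is a pair of partial functions $\phi_V,\phi_E$ such that whenever $\phi_E(e)$ is defined, $\phi_V$ is defined on all nodes incident to $e$, $l_{G'}(\phi_E(e))=l_G(e)$ and $\phi_V(c_G(e))=c_{G'}(\phi_E(e))$. "Total" means defined everywhere. Pushouts are taken in the category of graphs and partial morphisms (always exist, unique up to isomorphism; concretely: quotient of $G_1\sqcup G_2$ by the smallest equivalence identifying $\phi(x)$ and $\psi(x)$ for $x\in G_0$, dropping classes containing the image of an $x\in G_0$ on which $\phi$ or $\psi$ is undefined and edge classes incident to dropped node classes). A subgraph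 morphism is a morphism that is injective and surjective (as partial functions on nodes and edges). A universally quantified rule is $\rho=(r,U)$ with $r\colon L\rightharpoonup R$ and $U$ a finite set of pairs $u=(p_u,q_u)$, $p_u\colon L\to L_u$ total injective, $q_u\colon L_u\rightharpoonup R_u$, such that for every $x\in L$, $q_u(p_u(x))$ is defined and has exactly one preimage under $q_u$; $Q(u)$ is the set of $v\in V_L$ such that some edge incident to $p_u(v)$ has no preimage under $p_u$, required nonempty. Instantiations $(\pi\colon L\to\overline L$ total injective, $\gamma\colon\overline L\rightharpoonup\overline R)$ are defined recursively: $(\mathrm{id}_L,r)$ is one (length 0); if $(\pi,\gamma)$ is one of length $n$ and $u\in U$, let $\overline L_u$ with $p_u'\colon\overline L\to\overline L_u$, $\pi'\colon L_u\to\overline L_u$ be the pushout of $\pi,p_u$, let $\overline R_u$ with $\alpha\colon\overline R\rightharpoonup\overline R_u$, $\beta\colon R_u\rightharpoonup\overline R_u$ be the pushout of $\gamma\circ\pi$ and $q_u\circ p_u$, and $\eta\colon\overline L_u\rightharpoonup\overline R_u$ the unique morphism with $\eta\circ p_u'=\alpha\circ\gamma$, $\eta\circ\pi'=\beta\circ q_u$; then $(\pi,\gamma)\oplus u:=(p_u'\circ\pi,\eta)$ is an instantiation of length $n+1$. *)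

theory Defs
  imports Main
begin

text \<open>Hypergraphs over a finite label type 'l with arity function ar.
  Nodes and edges are drawn from nat (every finite graph is isomorphic to one of these).\<close>

record 'l hgraph =
  gV :: "nat set"
  gE :: "nat set"
  gc :: "nat \<Rightarrow> nat list"
  gl :: "nat \<Rightarrow> 'l"

definition is_graph :: "('l::finite \<Rightarrow> nat) \<Rightarrow> 'l hgraph \<Rightarrow> bool" where
  "is_graph ar G \<longleftrightarrow> finite (gV G) \<and> finite (gE G) \<and>
     (\<forall>e\<in>gE G. set (gc G e) \<subseteq> gV G \<and> length (gc G e) = ar (gl G e))"

record morph =
  mV :: "nat \<rightharpoonup> nat"
  mE :: "nat \<rightharpoonup> nat"

definition is_morph :: "'l hgraph \<Rightarrow> 'l hgraph \<Rightarrow> morph \<Rightarrow> bool" where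
  "is_morph G G' f \<longleftrightarrow>
     dom (mV f) \<subseteq> gV G \<and> dom (mE f) \<subseteq> gE G \<and>
     (\<forall>v y. mV f v = Some y \<longrightarrow> y \<in> gV G') \<and>
     (\<forall>e e'. mE f e = Some e' \<longrightarrow>
        e' \<in> gE G' \<and> set (gc G e) \<subseteq> dom (mV f) \<and> gl G' e' = gl G e \<and>
        map (\<lambda>v. the (mV f v)) (gc G e) = gc G' e')"

definition mcomp :: "morph \<Rightarrow> morph \<Rightarrow> morph" (infixl "\<circ>\<^sub>m" 55) where
  "g \<circ>\<^sub>m f = \<lparr>mV = mV g \<circ>\<^sub>m mV f, mE = mE g \<circ>\<^sub>m mE f\<rparr>"

definition mid :: "'l hgraph \<Rightarrow> morph" where
  "mid G = \<lparr>mV = (\<lambda>v. if v \<in> gV G then Some v else None),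
            mE = (\<lambda>e. if e \<in> gE G then Some e else None)\<rparr>"

definition is_total :: "'l hgraph \<Rightarrow> morph \<Rightarrow> bool" where
  "is_total G f \<longleftrightarrow> dom (mV f) = gV G \<and> dom (mE f) = gE G"

definition is_injective :: "morph \<Rightarrow> bool" where
  "is_injective f \<longleftrightarrow> inj_on (mV f) (dom (mV f)) \<and> inj_on (mE f) (dom (mE f))"

definition is_surjective :: "'l hgraph \<Rightarrow> morph \<Rightarrow> bool" where
  "is_surjective G' f \<longleftrightarrow> ran (mV f) = gV G' \<and> ran (mE f) = gE G'"

definition subgraph_morph :: "'l hgraph \<Rightarrow> 'l hgraph \<Rightarrow> morph \<Rightarrow> bool" where
  "subgraph_morph G G' f \<longleftrightarrow> is_morph G G' f \<and> is_injective f \<and> is_surjective G' f"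

definition is_pushout ::
  "('l::finite \<Rightarrow> nat) \<Rightarrow> 'l hgraph \<Rightarrow> 'l hgraph \<Rightarrow> 'l hgraph \<Rightarrow> morph \<Rightarrow> morph \<Rightarrow>
   'l hgraph \<Rightarrow> morph \<Rightarrow> morph \<Rightarrow> bool" where
  "is_pushout ar G0 G1 G2 phi psi G3 phi' psi' \<longleftrightarrow>
     is_graph ar G3 \<and> is_morph G1 G3 phi' \<and> is_morph G2 G3 psi' \<and>
     phi' \<circ>\<^sub>m phi = psi' \<circ>\<^sub>m psi \<and>
     (\<forall>H a b. is_graph ar H \<and> is_morph G1 H a \<and> is_morph G2 H b \<and> a \<circ>\<^sub>m phi = b \<circ>\<^sub>m psi \<longrightarrow>
        (\<exists>!h. is_morph G3 H h \<and> h \<circ>\<^sub>m phi' = a \<and> h \<circ>\<^sub>m psi' = b))"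

text \<open>A universally quantified rule: (L, R, r, U); each u in U is (L_u, p_u, R_u, q_u).\<close>
type_synonym 'l urule =
  "'l hgraph \<times> 'l hgraph \<times> morph \<times> ('l hgraph \<times> morph \<times> 'l hgraph \<times> morph) set"

definition Qset :: "'l hgraph \<Rightarrow> 'l hgraph \<Rightarrow> morph \<Rightarrow> nat set" where
  "Qset L Lu p = {v \<in> gV L. \<exists>e\<in>gE Lu. e \<notin> ran (mE p) \<and>
        (\<exists>v'. mV p v = Some v' \<and> v' \<in> set (gc Lu e))}"

definition is_urule :: "('l::finite \<Rightarrow> nat) \<Rightarrow> 'l urule \<Rightarrow> bool" where
  "is_urule ar \<rho> \<longleftrightarrow> (case \<rho> of (L, R, r, U) \<Rightarrow>
     is_graph ar L \<and> is_graph ar R \<and> is_morph L R r \<and> finite U \<and>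
     (\<forall>(Lu, p, Ru, q) \<in> U.
        is_graph ar Lu \<and> is_graph ar Ru \<and>
        is_morph L Lu p \<and> is_total L p \<and> is_injective p \<and> is_morph Lu Ru q \<and>
        (\<forall>x\<in>gV L. \<forall>x'. mV p x = Some x' \<longrightarrow>
            (\<exists>y. mV q x' = Some y \<and> (\<forall>z. mV q z = Some y \<longrightarrow> z = x'))) \<and>
        (\<forall>x\<in>gE L. \<forall>x'. mE p x = Some x' \<longrightarrow>
            (\<exists>y. mE q x' = Some y \<and> (\<forall>z. mE q z = Some y \<longrightarrow> z = x'))) \<and>
        Qset L Lu p \<noteq> {}))"

text \<open>One extension step (\<pi>,\<gamma>) \<oplus> u, with arbitrary choice of the two pushouts:
  (Lb, pi, Rb, gamma) \<oplus> (Lu, p, Ru, q) yields (Lbu, p' \<circ> pi, Rbu, eta).\<close>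
definition oplus_step ::
  "('l::finite \<Rightarrow> nat) \<Rightarrow> 'l hgraph \<Rightarrow>
   ('l hgraph \<times> morph \<times> 'l hgraph \<times> morph) \<Rightarrow>
   ('l hgraph \<times> morph \<times> 'l hgraph \<times> morph) \<Rightarrow>
   ('l hgraph \<times> morph \<times> 'l hgraph \<times> morph) \<Rightarrow> bool" where
  "oplus_step ar L inst u res \<longleftrightarrow>
    (case inst of (Lb, pi, Rb, gamma) \<Rightarrow> case u of (Lu, p, Ru, q) \<Rightarrow>
     case res of (Lbu, pinew, Rbu, eta) \<Rightarrow>
     (\<exists>p' pi' alpha beta.
        is_pushout ar L Lb Lu pi p Lbu p' pi' \<and>
        is_pushout ar L Rb Ru (gamma \<circ>\<^sub>m pi) (q \<circ>\<^sub>m p) Rbu alpha beta \<and>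
        is_morph Lbu Rbu eta \<and>
        eta \<circ>\<^sub>m p' = alpha \<circ>\<^sub>m gamma \<and> eta \<circ>\<^sub>m pi' = beta \<circ>\<^sub>m q \<and>
        pinew = p' \<circ>\<^sub>m pi))"

inductive_set instantiations ::
  "('l::finite \<Rightarrow> nat) \<Rightarrow> 'l urule \<Rightarrow> ('l hgraph \<times> morph \<times> 'l hgraph \<times> morph) set"
  for ar :: "'l::finite \<Rightarrow> nat" and \<rho> :: "'l urule" where
  base: "\<rho> = (L, R, r, U) \<Longrightarrow> (L, mid L, R, r) \<in> instantiations ar \<rho>"
| step: "\<rho> = (L, R, r, U) \<Longrightarrow> i \<in> instantiations ar \<rho> \<Longrightarrow> u \<in> U \<Longrightarrow>
         oplus_step ar L i u res \<Longrightarrow> res \<in> instantiations ar \<rho>"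

end

theory Submission
  imports Defs
begin

(* In an extension step the left pushout glues L_u onto Lbar along
   p : L -> L_u, the right one glues R_u onto Rbar along q o p.  Both p and q o p are
   injective (the latter because q has unique preimages on the image of p), so any
   partial morphism f out of L can be transported along them: f o p^-1 and
   (gamma o pi) o (q o p)^-1.  The pair (identity, transported map) is a cocone, and
   the induced morphism out of the pushout is a retraction of the first leg; since
   the legs of a pushout are jointly surjective, such a retraction is a subgraph
   morphism.  This gives mu' and mu''.  The square gamma o mu' = mu'' o eta is then
   checked on the two legs of the left pushout, where it reduces to a naturality
   property of the transport, and concluded from the uniqueness half of the
   universal property. *)

section \<open>Partial morphisms\<close>

lemma morph_eqI: "mV f = mV g \<Longrightarrow> mE f = mE g \<Longrightarrow> f = (g::morph)"
  by (cases f, cases g) simp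

lemma mcomp_V [simp]: "mV (g \<circ>\<^sub>m f) = map_comp (mV g) (mV f)"
  and mcomp_E [simp]: "mE (g \<circ>\<^sub>m f) = map_comp (mE g) (mE f)"
  by (simp_all add: mcomp_def)

lemma map_comp_assoc: "map_comp (map_comp f g) h = map_comp f (map_comp g h)"
  by (rule ext) (auto simp: map_comp_def split: option.splits)

lemma mcomp_assoc: "(h \<circ>\<^sub>m g) \<circ>\<^sub>m f = h \<circ>\<^sub>m (g \<circ>\<^sub>m (f::morph))"
  by (rule morph_eqI) (simp_all add: map_comp_assoc)

text \<open>The attachment sequence of an edge in the image of a morphism consists of
  image nodes.  This is what makes the images of morphisms subgraphs.\<close>
lemma set_map_ran: "set xs \<subseteq> dom f \<Longrightarrow> map (\<lambda>v. the (f v)) xs = ys \<Longrightarrow> set ys \<subseteq> ran f"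
proof
  fix y assume "set xs \<subseteq> dom f" "map (\<lambda>v. the (f v)) xs = ys" "y \<in> set ys"
  then obtain v where v: "v \<in> set xs" "y = the (f v)" by auto
  then obtain w where "f v = Some w" using \<open>set xs \<subseteq> dom f\<close> by blast
  then show "y \<in> ran f" using v by (auto intro: ranI)
qed

lemma morph_edge_image:
  assumes "is_morph G G' f" "e \<in> ran (mE f)"
  shows "set (gc G' e) \<subseteq> ran (mV f)"
proof -
  obtain e0 where "mE f e0 = Some e" using assms(2) by (auto simp: ran_def)
  then have "set (gc G e0) \<subseteq> dom (mV f)" "map (\<lambda>v. the (mV f v)) (gc G e0) = gc G' e"
    using assms(1) unfolding is_morph_def by blast+
  then show ?thesis by (rule set_map_ran)
qed

lemma morph_comp:
  fixes f g :: morph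
  assumes f: "is_morph G1 G2 f" and g: "is_morph G2 G3 g"
  shows "is_morph G1 G3 (g \<circ>\<^sub>m f)"
proof -
  have edge: "e'' \<in> gE G3 \<and> set (gc G1 e) \<subseteq> dom (mV (g \<circ>\<^sub>m f)) \<and> gl G3 e'' = gl G1 e \<and>
        map (\<lambda>v. the (mV (g \<circ>\<^sub>m f) v)) (gc G1 e) = gc G3 e''"
    if ge: "mE (g \<circ>\<^sub>m f) e = Some e''" for e e''
  proof -
    obtain e' where f1: "mE f e = Some e'" and g1: "mE g e' = Some e''"
      using ge by (auto simp: map_comp_Some_iff)
    from f f1 have F: "e' \<in> gE G2" "set (gc G1 e) \<subseteq> dom (mV f)" "gl G2 e' = gl G1 e"
       "map (\<lambda>v. the (mV f v)) (gc G1 e) = gc G2 e'" unfolding is_morph_def by blast+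
    from g g1 have G: "e'' \<in> gE G3" "set (gc G2 e') \<subseteq> dom (mV g)" "gl G3 e'' = gl G2 e'"
       "map (\<lambda>v. the (mV g v)) (gc G2 e') = gc G3 e''" unfolding is_morph_def by blast+
    have "set (gc G1 e) \<subseteq> dom (mV (g \<circ>\<^sub>m f))"
    proof
      fix v assume v: "v \<in> set (gc G1 e)"
      then obtain w where w: "mV f v = Some w" using F(2) by blast
      then have "w \<in> set (gc G2 e')" using v F(4)[symmetric] by force
      then show "v \<in> dom (mV (g \<circ>\<^sub>m f))" using G(2) w by (auto simp: map_comp_def)
    qed
    moreover have "map (\<lambda>v. the (mV (g \<circ>\<^sub>m f) v)) (gc G1 e)
        = map (\<lambda>v. the (mV g v)) (map (\<lambda>v. the (mV f v)) (gc G1 e))"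
      using F(2) by (auto simp: map_comp_def)
    ultimately show ?thesis using F G by simp
  qed
  show ?thesis using f g edge unfolding is_morph_def
    by (auto simp: map_comp_Some_iff dom_def)
qed

definition restr_id :: "nat set \<Rightarrow> nat set \<Rightarrow> morph" where
  "restr_id SV SE = \<lparr>mV = (\<lambda>v. if v \<in> SV then Some v else None),
                     mE = (\<lambda>e. if e \<in> SE then Some e else None)\<rparr>"

lemma mid_restr_id: "mid G = restr_id (gV G) (gE G)"
  by (simp add: mid_def restr_id_def)

lemma restr_id_morph:
  assumes "is_graph ar G" "SV \<subseteq> gV G" "SE \<subseteq> gE G" "\<And>e. e \<in> SE \<Longrightarrow> set (gc G e) \<subseteq> SV"
  shows "is_morph G G (restr_id SV SE)"
  unfolding is_morph_def
proof (intro conjI allI impI)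
  fix e e' assume e: "mE (restr_id SV SE) e = Some e'"
  then have "e' = e" "e \<in> SE" by (auto simp: restr_id_def split: if_splits)
  moreover from this have "set (gc G e) \<subseteq> SV" using assms(4) by blast
  ultimately show "e' \<in> gE G" "set (gc G e) \<subseteq> dom (mV (restr_id SV SE))" "gl G e' = gl G e"
      "map (\<lambda>v. the (mV (restr_id SV SE) v)) (gc G e) = gc G e'"
    using assms(3) by (auto simp: restr_id_def dom_def intro!: map_idI)
qed (use assms(2,3) in \<open>auto simp: restr_id_def split: if_splits\<close>)

lemma mid_morph: "is_graph ar G \<Longrightarrow> is_morph G G (mid G)"
  unfolding mid_restr_id by (rule restr_id_morph) (auto simp: is_graph_def)

lemma restr_id_comp:
  "ran (mV f) \<subseteq> SV \<Longrightarrow> ran (mE f) \<subseteq> SE \<Longrightarrow> restr_id SV SE \<circ>\<^sub>m f = f"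
  unfolding restr_id_def
  by (intro morph_eqI) (auto simp: map_comp_def fun_eq_iff ran_def split: option.splits)

lemma mid_comp: "is_morph G1 G2 f \<Longrightarrow> mid G2 \<circ>\<^sub>m f = f"
  unfolding mid_restr_id is_morph_def by (intro restr_id_comp) (auto simp: ran_def)

lemma map_comp_restr_id: "dom m \<subseteq> S \<Longrightarrow> map_comp m (\<lambda>v. if v \<in> S then Some v else None) = m"
proof
  fix x assume "dom m \<subseteq> S"
  then show "map_comp m (\<lambda>v. if v \<in> S then Some v else None) x = m x"
  proof (cases "x \<in> S")
    case False
    then have "m x = None" using \<open>dom m \<subseteq> S\<close> by (metis domIff subsetD)
    then show ?thesis using False by simp
  qed simp
qed

lemma comp_mid: "is_morph G1 G2 f \<Longrightarrow> f \<circ>\<^sub>m mid G1 = f"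
  unfolding mid_def is_morph_def by (intro morph_eqI) (simp_all add: map_comp_restr_id)

section \<open>Transport along an injective map\<close>

text \<open>For an injective partial map k and a map f with the same source,
  transport k f is f o k^-1: it sends k x to f x and is undefined off the image of k.\<close>
definition transport :: "(nat \<rightharpoonup> nat) \<Rightarrow> (nat \<rightharpoonup> nat) \<Rightarrow> (nat \<rightharpoonup> nat)" where
  "transport k f y = (if \<exists>x. k x = Some y then f (THE x. k x = Some y) else None)"

definition mtransport :: "morph \<Rightarrow> morph \<Rightarrow> morph" where
  "mtransport k f = \<lparr>mV = transport (mV k) (mV f), mE = transport (mE k) (mE f)\<rparr>"

lemma transport_at: "inj_on k (dom k) \<Longrightarrow> k x = Some y \<Longrightarrow> transport k f y = f x"
proof -
  assume i: "inj_on k (dom k)" and kx: "k x = Some y"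
  have "(THE x. k x = Some y) = x"
    by (rule the_equality) (use i kx in \<open>auto simp: inj_on_def domI\<close>)
  then show ?thesis using kx unfolding transport_def by auto
qed

lemma transport_ran: "transport k f y \<noteq> None \<Longrightarrow> y \<in> ran k"
  unfolding transport_def by (auto simp: ran_def split: if_splits)

lemma transport_comp: "inj_on k (dom k) \<Longrightarrow> dom f \<subseteq> dom k \<Longrightarrow> map_comp (transport k f) k = f"
proof (rule ext)
  fix x assume i: "inj_on k (dom k)" and d: "dom f \<subseteq> dom k"
  show "map_comp (transport k f) k x = f x"
  proof (cases "k x")
    case None
    then have "x \<notin> dom f" using d by auto
    then show ?thesis using None by (simp add: domIff)
  qed (simp add: transport_at[OF i])
qed

lemma mtransport_comp:
  assumes "is_injective k" "dom (mV f) \<subseteq> dom (mV k)" "dom (mE f) \<subseteq> dom (mE k)"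
  shows "mtransport k f \<circ>\<^sub>m k = f"
  using assms by (intro morph_eqI) (simp_all add: mtransport_def transport_comp is_injective_def)

lemma mtransport_morph:
  assumes k: "is_morph G0 G2 k" and f: "is_morph G0 G1 f" and i: "is_injective k"
  shows "is_morph G2 G1 (mtransport k f)"
  unfolding is_morph_def
proof (intro conjI allI impI)
  have iV: "inj_on (mV k) (dom (mV k))" and iE: "inj_on (mE k) (dom (mE k))"
    using i unfolding is_injective_def by auto
  have "ran (mV k) \<subseteq> gV G2" "ran (mE k) \<subseteq> gE G2"
    using k unfolding is_morph_def ran_def by blast+
  then show "dom (mV (mtransport k f)) \<subseteq> gV G2" "dom (mE (mtransport k f)) \<subseteq> gE G2"
    using transport_ran by (fastforce simp: mtransport_def)+
  show "y \<in> gV G1" if "mV (mtransport k f) v = Some y" for v y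
  proof -
    have "v \<in> ran (mV k)" using that transport_ran[of "mV k" "mV f" v] by (auto simp: mtransport_def)
    then obtain x where x: "mV k x = Some v" by (auto simp: ran_def)
    then have "mV f x = Some y" using that transport_at[OF iV x] by (simp add: mtransport_def)
    then show ?thesis using f unfolding is_morph_def by blast
  qed
  fix e e' assume "mE (mtransport k f) e = Some e'"
  then have me: "transport (mE k) (mE f) e = Some e'" by (simp add: mtransport_def)
  obtain e0 where ke: "mE k e0 = Some e"
    using me transport_ran[of "mE k" "mE f" e] by (auto simp: ran_def)
  have fe: "mE f e0 = Some e'" using me transport_at[OF iE ke] by simp
  have K: "set (gc G0 e0) \<subseteq> dom (mV k)" "gl G2 e = gl G0 e0"
     "map (\<lambda>v. the (mV k v)) (gc G0 e0) = gc G2 e" using k ke unfolding is_morph_def by blast+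
  have F: "e' \<in> gE G1" "set (gc G0 e0) \<subseteq> dom (mV f)" "gl G1 e' = gl G0 e0"
     "map (\<lambda>v. the (mV f v)) (gc G0 e0) = gc G1 e'" using f fe unfolding is_morph_def by blast+
  have pt: "transport (mV k) (mV f) (the (mV k v)) = mV f v" if v: "v \<in> set (gc G0 e0)" for v
  proof -
    obtain w where w: "mV k v = Some w" using v K(1) by blast
    then show ?thesis using transport_at[OF iV w] by simp
  qed
  show "e' \<in> gE G1" by (rule F(1))
  show "gl G1 e' = gl G2 e" using K F by simp
  show "set (gc G2 e) \<subseteq> dom (mV (mtransport k f))"
    using pt F(2) K(3)[symmetric] by (auto simp: mtransport_def)
  have "map (\<lambda>v. the (mV (mtransport k f) v)) (gc G2 e)
      = map (\<lambda>v. the (mV (mtransport k f) (the (mV k v)))) (gc G0 e0)"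
    using K(3)[symmetric] by simp
  also have "\<dots> = map (\<lambda>v. the (mV f v)) (gc G0 e0)"
    using pt by (auto simp: mtransport_def)
  finally show "map (\<lambda>v. the (mV (mtransport k f) v)) (gc G2 e) = gc G1 e'" using F(4) by simp
qed

text \<open>q has unique preimages on A: it is defined on every y in A, and y is the only
  point mapped to q y.  This is the side condition on the rules of a universally
  quantified rule.\<close>
definition unique_preimages :: "(nat \<rightharpoonup> nat) \<Rightarrow> nat set \<Rightarrow> bool" where
  "unique_preimages q A \<longleftrightarrow> (\<forall>y\<in>A. \<exists>w. q y = Some w \<and> (\<forall>z. q z = Some w \<longrightarrow> z = y))"

lemma unique_preimages_defined: "unique_preimages q A \<Longrightarrow> y \<in> A \<Longrightarrow> \<exists>w. q y = Some w"
  unfolding unique_preimages_def by blast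

lemma unique_preimages_unique:
  "unique_preimages q A \<Longrightarrow> y \<in> A \<Longrightarrow> q z = Some w \<Longrightarrow> q y = Some w \<Longrightarrow> z = y"
  unfolding unique_preimages_def by (metis option.inject)

lemma unique_preimages_inj:
  assumes ip: "inj_on p (dom p)" and uq: "unique_preimages q (ran p)"
  shows "inj_on (map_comp q p) (dom (map_comp q p))"
proof (rule inj_onI)
  fix x1 x2 assume "x1 \<in> dom (map_comp q p)" "x2 \<in> dom (map_comp q p)"
    and "map_comp q p x1 = map_comp q p x2"
  then obtain y1 y2 w where 1: "p x1 = Some y1" "q y1 = Some w" and 2: "p x2 = Some y2" "q y2 = Some w"
    by (auto simp: map_comp_Some_iff dom_def)
  have "y2 = y1" using unique_preimages_unique[OF uq ranI[of p x1 y1, OF 1(1)] 2(2) 1(2)] .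
  then show "x1 = x2" using ip 1(1) 2(1) unfolding inj_on_def by (metis domI)
qed

lemma unique_preimages_dom:
  assumes uq: "unique_preimages q (ran p)"
  shows "dom (map_comp q p) = dom p"
proof
  show "dom (map_comp q p) \<subseteq> dom p" by (auto simp: map_comp_Some_iff)
  show "dom p \<subseteq> dom (map_comp q p)"
  proof
    fix x assume "x \<in> dom p"
    then obtain y where y: "p x = Some y" by blast
    then obtain w where "q y = Some w" using unique_preimages_defined[OF uq ranI[of p x y, OF y]] by blast
    then show "x \<in> dom (map_comp q p)" using y by (simp add: dom_def)
  qed
qed

text \<open>Naturality of transport: transporting g o f along q o p agrees, after q, with
  g applied to the transport of f along p.  Off the image of p both sides vanish,
  because there q never hits the image of q o p.\<close>
lemma transport_natural:
  assumes ip: "inj_on p (dom p)" and uq: "unique_preimages q (ran p)"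
  shows "map_comp g (transport p f) = map_comp (transport (map_comp q p) (map_comp g f)) q"
proof (rule ext)
  have iq: "inj_on (map_comp q p) (dom (map_comp q p))" by (rule unique_preimages_inj[OF ip uq])
  fix c
  show "map_comp g (transport p f) c = map_comp (transport (map_comp q p) (map_comp g f)) q c"
  proof (cases "c \<in> ran p")
    case True
    then obtain x where x: "p x = Some c" by (auto simp: ran_def)
    obtain w where w: "q c = Some w" using unique_preimages_defined[OF uq True] by blast
    have "map_comp q p x = Some w" using x w by simp
    then show ?thesis using transport_at[OF ip x] transport_at[OF iq] w by (simp add: map_comp_def)
  next
    case False
    then have l: "transport p f c = None" using transport_ran[of p f c] by blast
    have "transport (map_comp q p) (map_comp g f) w = None" if qc: "q c = Some w" for w
    proof -
      have "w \<notin> ran (map_comp q p)"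
      proof
        assume "w \<in> ran (map_comp q p)"
        then obtain y where y: "y \<in> ran p" "q y = Some w" by (auto simp: ran_def map_comp_Some_iff)
        then have "c = y" using unique_preimages_unique[OF uq y(1) qc y(2)] by simp
        then show False using False y(1) by simp
      qed
      then show ?thesis using transport_ran by blast
    qed
    then show ?thesis using l by (cases "q c") simp_all
  qed
qed

section \<open>Pushouts\<close>

lemma pushout_morph_eq:
  fixes h h' phi' psi' :: morph
  assumes PO: "is_pushout ar G0 G1 G2 phi psi G3 phi' psi'" and H: "is_graph ar H"
    and h: "is_morph G3 H h" and h': "is_morph G3 H h'"
    and eq1: "h \<circ>\<^sub>m phi' = h' \<circ>\<^sub>m phi'" and eq2: "h \<circ>\<^sub>m psi' = h' \<circ>\<^sub>m psi'"
  shows "h = h'"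
proof -
  have m1: "is_morph G1 G3 phi'" and m2: "is_morph G2 G3 psi'"
    and c: "phi' \<circ>\<^sub>m phi = psi' \<circ>\<^sub>m psi"
    and univ: "\<And>a b. is_morph G1 H a \<Longrightarrow> is_morph G2 H b \<Longrightarrow> a \<circ>\<^sub>m phi = b \<circ>\<^sub>m psi \<Longrightarrow>
        \<exists>!g. is_morph G3 H g \<and> g \<circ>\<^sub>m phi' = a \<and> g \<circ>\<^sub>m psi' = b"
    using PO H unfolding is_pushout_def by blast+
  have "(h \<circ>\<^sub>m phi') \<circ>\<^sub>m phi = (h \<circ>\<^sub>m psi') \<circ>\<^sub>m psi" using c by (simp add: mcomp_assoc)
  then show ?thesis
    using univ[OF morph_comp[OF m1 h] morph_comp[OF m2 h]] h h' eq1 eq2 by metis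
qed

text \<open>The two legs of a pushout are jointly surjective: the identity restricted to
  their images agrees with the identity on both legs, hence is the identity.\<close>
lemma pushout_jointly_surjective:
  assumes PO: "is_pushout ar G0 G1 G2 phi psi G3 phi' psi'"
  shows "gV G3 \<subseteq> ran (mV phi') \<union> ran (mV psi')" "gE G3 \<subseteq> ran (mE phi') \<union> ran (mE psi')"
proof -
  have g3: "is_graph ar G3" and m1: "is_morph G1 G3 phi'" and m2: "is_morph G2 G3 psi'"
    using PO unfolding is_pushout_def by blast+
  define SV where "SV = ran (mV phi') \<union> ran (mV psi')"
  define SE where "SE = ran (mE phi') \<union> ran (mE psi')"
  have "is_morph G3 G3 (restr_id SV SE)"
  proof (rule restr_id_morph[OF g3])
    show "SV \<subseteq> gV G3" "SE \<subseteq> gE G3"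
      using m1 m2 unfolding SV_def SE_def is_morph_def ran_def by blast+
    show "set (gc G3 e) \<subseteq> SV" if "e \<in> SE" for e
      using that morph_edge_image[OF m1, of e] morph_edge_image[OF m2, of e]
      unfolding SV_def SE_def by blast
  qed
  moreover have "restr_id SV SE \<circ>\<^sub>m phi' = mid G3 \<circ>\<^sub>m phi'" "restr_id SV SE \<circ>\<^sub>m psi' = mid G3 \<circ>\<^sub>m psi'"
    unfolding mid_comp[OF m1] mid_comp[OF m2] SV_def SE_def by (simp_all add: restr_id_comp)
  ultimately have "restr_id SV SE = restr_id (gV G3) (gE G3)"
    using pushout_morph_eq[OF PO g3] mid_morph[OF g3] unfolding mid_restr_id by blast
  then show "gV G3 \<subseteq> ran (mV phi') \<union> ran (mV psi')" "gE G3 \<subseteq> ran (mE phi') \<union> ran (mE psi')"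
    unfolding SV_def SE_def restr_id_def by (auto simp: fun_eq_iff split: if_splits; metis)+
qed

text \<open>H is a left inverse of P' on T
  and, through P'', only sees points that come from the common source; so every
  point of dom H lies in the image of P', which makes H injective, and H hits all of T.\<close>
lemma retraction_inj_surj:
  fixes H P' P'' P0 Q0 B :: "nat \<rightharpoonup> nat"
  assumes dH: "dom H \<subseteq> S" and js: "S \<subseteq> ran P' \<union> ran P''"
    and h1: "map_comp H P' = (\<lambda>v. if v \<in> T then Some v else None)"
    and h2: "map_comp H P'' = B" and dB: "dom B \<subseteq> ran Q0"
    and sq: "map_comp P' P0 = map_comp P'' Q0" and rH: "ran H \<subseteq> T"
  shows "inj_on H (dom H) \<and> ran H = T"
proof -
  have from_P': "\<exists>y. P' y = Some z \<and> H z = Some y" if z: "z \<in> dom H" for z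
  proof -
    have "\<exists>y. P' y = Some z"
    proof (cases "z \<in> ran P'")
      case False
      then have "z \<in> ran P''" using z dH js by blast
      then obtain c where c: "P'' c = Some z" by (auto simp: ran_def)
      then have "c \<in> dom B" using z h2 by (auto simp: map_comp_def)
      then obtain x where "Q0 x = Some c" using dB by (auto simp: ran_def)
      then have "map_comp P' P0 x = Some z" using sq c by simp
      then show ?thesis by (auto simp: map_comp_Some_iff)
    qed (auto simp: ran_def)
    then obtain y where y: "P' y = Some z" by blast
    then have "H z = (if y \<in> T then Some y else None)" using fun_cong[OF h1, of y] by simp
    then show ?thesis using y z by (auto split: if_splits)
  qed
  have "inj_on H (dom H)"
    by (rule inj_onI) (metis from_P' option.inject)
  moreover have "T \<subseteq> ran H"
  proof
    fix y assume "y \<in> T"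
    then have "map_comp H P' y = Some y" using h1 by simp
    then show "y \<in> ran H" by (auto simp: map_comp_Some_iff ran_def)
  qed
  ultimately show ?thesis using rH by blast
qed

lemma pushout_retraction_subgraph:
  fixes h b phi' psi' :: morph
  assumes PO: "is_pushout ar G0 G1 G2 phi psi G3 phi' psi'"
    and h: "is_morph G3 G1 h" and h1: "h \<circ>\<^sub>m phi' = mid G1" and h2: "h \<circ>\<^sub>m psi' = b"
    and bV: "dom (mV b) \<subseteq> ran (mV psi)" and bE: "dom (mE b) \<subseteq> ran (mE psi)"
  shows "subgraph_morph G3 G1 h"
proof -
  have c: "phi' \<circ>\<^sub>m phi = psi' \<circ>\<^sub>m psi" using PO unfolding is_pushout_def by blast
  have js: "gV G3 \<subseteq> ran (mV phi') \<union> ran (mV psi')" "gE G3 \<subseteq> ran (mE phi') \<union> ran (mE psi')"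
    by (rule pushout_jointly_surjective[OF PO])+
  have hd: "dom (mV h) \<subseteq> gV G3" "dom (mE h) \<subseteq> gE G3" "ran (mV h) \<subseteq> gV G1" "ran (mE h) \<subseteq> gE G1"
    using h unfolding is_morph_def by (auto simp: ran_def)
  have "inj_on (mV h) (dom (mV h)) \<and> ran (mV h) = gV G1"
    using arg_cong[OF c, of mV] arg_cong[OF h1, of mV] arg_cong[OF h2, of mV]
    by (intro retraction_inj_surj[OF hd(1) js(1) _ _ bV _ hd(3)]) (simp_all add: mid_def)
  moreover have "inj_on (mE h) (dom (mE h)) \<and> ran (mE h) = gE G1"
    using arg_cong[OF c, of mE] arg_cong[OF h1, of mE] arg_cong[OF h2, of mE]
    by (intro retraction_inj_surj[OF hd(2) js(2) _ _ bE _ hd(4)]) (simp_all add: mid_def)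
  ultimately show ?thesis
    using h unfolding subgraph_morph_def is_injective_def is_surjective_def by blast
qed

text \<open>Pushing out f along an injective k: the cocone (identity, f transported along k)
  induces a retraction of the pushout onto the codomain of f, which is a subgraph
  morphism.\<close>
lemma pushout_injective_retraction:
  fixes f k f' k' :: morph
  assumes PO: "is_pushout ar G0 G1 G2 f k G3 f' k'" and G1: "is_graph ar G1"
    and f: "is_morph G0 G1 f" and k: "is_morph G0 G2 k" and ik: "is_injective k"
    and dV: "dom (mV f) \<subseteq> dom (mV k)" and dE: "dom (mE f) \<subseteq> dom (mE k)"
  shows "\<exists>h. subgraph_morph G3 G1 h \<and> h \<circ>\<^sub>m f' = mid G1 \<and> h \<circ>\<^sub>m k' = mtransport k f"
proof -
  have "mid G1 \<circ>\<^sub>m f = mtransport k f \<circ>\<^sub>m k"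
    by (simp add: mid_comp[OF f] mtransport_comp[OF ik dV dE])
  then obtain h where h: "is_morph G3 G1 h" "h \<circ>\<^sub>m f' = mid G1" "h \<circ>\<^sub>m k' = mtransport k f"
    using PO G1 mid_morph[OF G1] mtransport_morph[OF k f ik] unfolding is_pushout_def by metis
  have "dom (mV (mtransport k f)) \<subseteq> ran (mV k)" "dom (mE (mtransport k f)) \<subseteq> ran (mE k)"
    using transport_ran by (fastforce simp: mtransport_def)+
  then have "subgraph_morph G3 G1 h" by (rule pushout_retraction_subgraph[OF PO h])
  then show ?thesis using h by blast
qed

section \<open>The extension step\<close>

lemma extension_step_subgraphs:
  fixes pi gamma p q p' pi' alpha beta eta :: morph
  assumes Lb: "is_graph ar Lb" and Rb: "is_graph ar Rb"
    and pi: "is_morph L Lb pi" and gamma: "is_morph Lb Rb gamma"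
    and p: "is_morph L Lu p" and tp: "is_total L p" and ip: "is_injective p"
    and q: "is_morph Lu Ru q"
    and uqV: "unique_preimages (mV q) (ran (mV p))" and uqE: "unique_preimages (mE q) (ran (mE p))"
    and P1: "is_pushout ar L Lb Lu pi p Lbu p' pi'"
    and P2: "is_pushout ar L Rb Ru (gamma \<circ>\<^sub>m pi) (q \<circ>\<^sub>m p) Rbu alpha beta"
    and eta: "is_morph Lbu Rbu eta"
    and e1: "eta \<circ>\<^sub>m p' = alpha \<circ>\<^sub>m gamma" and e2: "eta \<circ>\<^sub>m pi' = beta \<circ>\<^sub>m q"
  shows "\<exists>mu' mu''. subgraph_morph Lbu Lb mu' \<and> subgraph_morph Rbu Rb mu'' \<and>
           gamma \<circ>\<^sub>m mu' = mu'' \<circ>\<^sub>m eta"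
proof -
  have ipV: "inj_on (mV p) (dom (mV p))" and ipE: "inj_on (mE p) (dom (mE p))"
    using ip unfolding is_injective_def by auto
  have dp: "dom (mV p) = gV L" "dom (mE p) = gE L" using tp unfolding is_total_def by auto
  have dgp: "dom (mV (gamma \<circ>\<^sub>m pi)) \<subseteq> gV L" "dom (mE (gamma \<circ>\<^sub>m pi)) \<subseteq> gE L"
    using morph_comp[OF pi gamma] unfolding is_morph_def by auto
  have iqp: "is_injective (q \<circ>\<^sub>m p)"
    using unique_preimages_inj[OF ipV uqV] unique_preimages_inj[OF ipE uqE]
    by (simp add: is_injective_def)
  have dqp: "dom (mV (q \<circ>\<^sub>m p)) = gV L" "dom (mE (q \<circ>\<^sub>m p)) = gE L"
    using dp unique_preimages_dom[OF uqV] unique_preimages_dom[OF uqE] by simp_all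
  obtain mu' where mu': "subgraph_morph Lbu Lb mu'" "mu' \<circ>\<^sub>m p' = mid Lb"
      "mu' \<circ>\<^sub>m pi' = mtransport p pi"
    using pushout_injective_retraction[OF P1 Lb pi p ip] pi dp unfolding is_morph_def by auto
  obtain mu'' where mu'': "subgraph_morph Rbu Rb mu''" "mu'' \<circ>\<^sub>m alpha = mid Rb"
      "mu'' \<circ>\<^sub>m beta = mtransport (q \<circ>\<^sub>m p) (gamma \<circ>\<^sub>m pi)"
    using pushout_injective_retraction[OF P2 Rb morph_comp[OF pi gamma] morph_comp[OF p q] iqp]
      dgp dqp by auto
  have natural: "gamma \<circ>\<^sub>m mtransport p pi = mtransport (q \<circ>\<^sub>m p) (gamma \<circ>\<^sub>m pi) \<circ>\<^sub>m q"
    using transport_natural[OF ipV uqV] transport_natural[OF ipE uqE]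
    by (intro morph_eqI) (simp_all add: mtransport_def)
  have "gamma \<circ>\<^sub>m mu' = mu'' \<circ>\<^sub>m eta"
  proof (rule pushout_morph_eq[OF P1 Rb])
    show "is_morph Lbu Rb (gamma \<circ>\<^sub>m mu')" "is_morph Lbu Rb (mu'' \<circ>\<^sub>m eta)"
      using mu'(1) mu''(1) morph_comp gamma eta unfolding subgraph_morph_def by blast+
    have "gamma \<circ>\<^sub>m mu' \<circ>\<^sub>m p' = gamma \<circ>\<^sub>m mid Lb" by (simp add: mcomp_assoc mu'(2))
    also have "\<dots> = mid Rb \<circ>\<^sub>m gamma" by (simp add: comp_mid[OF gamma] mid_comp[OF gamma])
    also have "\<dots> = mu'' \<circ>\<^sub>m (alpha \<circ>\<^sub>m gamma)" by (simp add: mu''(2) flip: mcomp_assoc)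
    finally show "gamma \<circ>\<^sub>m mu' \<circ>\<^sub>m p' = mu'' \<circ>\<^sub>m eta \<circ>\<^sub>m p'" by (simp add: mcomp_assoc e1)
    have "gamma \<circ>\<^sub>m mu' \<circ>\<^sub>m pi' = gamma \<circ>\<^sub>m mtransport p pi" by (simp add: mcomp_assoc mu'(3))
    also have "\<dots> = mu'' \<circ>\<^sub>m (beta \<circ>\<^sub>m q)" by (simp add: natural mu''(3) flip: mcomp_assoc)
    finally show "gamma \<circ>\<^sub>m mu' \<circ>\<^sub>m pi' = mu'' \<circ>\<^sub>m eta \<circ>\<^sub>m pi'" by (simp add: mcomp_assoc e2)
  qed
  then show ?thesis using mu'(1) mu''(1) by blast
qed

lemma instantiation_wf:
  assumes "(Lb, pi, Rb, gamma) \<in> instantiations ar (L, R, r, U)" "is_urule ar (L, R, r, U)"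
  shows "is_graph ar Lb \<and> is_graph ar Rb \<and> is_morph L Lb pi \<and> is_morph Lb Rb gamma"
  using assms(1)
proof (induction "(Lb, pi, Rb, gamma)" arbitrary: Lb pi Rb gamma)
  case (base L' R' r' U')
  have "is_graph ar L" "is_graph ar R" "is_morph L R r"
    using assms(2) unfolding is_urule_def by simp_all
  then show ?case using base mid_morph[of ar L] by auto
next
  case (step L' R' r' U' i u)
  have L': "L' = L" using step.hyps(1) by simp
  obtain Lb0 pi0 Rb0 gamma0 where i: "i = (Lb0, pi0, Rb0, gamma0)" by (cases i) auto
  obtain Lu p Ru q where u: "u = (Lu, p, Ru, q)" by (cases u) auto
  obtain p' pi' alpha beta where
    P1: "is_pushout ar L Lb0 Lu pi0 p Lb p' pi'" and
    P2: "is_pushout ar L Rb0 Ru (gamma0 \<circ>\<^sub>m pi0) (q \<circ>\<^sub>m p) Rb alpha beta" and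
    "is_morph Lb Rb gamma" "pi = p' \<circ>\<^sub>m pi0"
    using step.hyps(5) unfolding i u L' oplus_step_def by auto
  moreover have "is_graph ar Lb" "is_morph Lb0 Lb p'" "is_graph ar Rb"
    using P1 P2 unfolding is_pushout_def by blast+
  ultimately show ?case using step.hyps(3)[OF i] morph_comp[of L Lb0 pi0 Lb p'] by simp
qed

text \<open>The conditions on a member of U, with the unique-preimage requirement on q
  expressed over the image of p (which is all of the domain of p since p is total).\<close>
lemma urule_member:
  assumes "is_urule ar (L, R, r, U)" "(Lu, p, Ru, q) \<in> U"
  shows "is_morph L Lu p \<and> is_total L p \<and> is_injective p \<and> is_morph Lu Ru q \<and>
    unique_preimages (mV q) (ran (mV p)) \<and> unique_preimages (mE q) (ran (mE p))"
proof -
  have member: "is_morph L Lu p \<and> is_total L p \<and> is_injective p \<and> is_morph Lu Ru q \<and>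
      (\<forall>x\<in>gV L. \<forall>x'. mV p x = Some x' \<longrightarrow>
          (\<exists>y. mV q x' = Some y \<and> (\<forall>z. mV q z = Some y \<longrightarrow> z = x'))) \<and>
      (\<forall>x\<in>gE L. \<forall>x'. mE p x = Some x' \<longrightarrow>
          (\<exists>y. mE q x' = Some y \<and> (\<forall>z. mE q z = Some y \<longrightarrow> z = x')))"
    using bspec[OF assms(1)[unfolded is_urule_def prod.case, THEN conjunct2, THEN conjunct2,
          THEN conjunct2, THEN conjunct2] assms(2)]
    by simp
  moreover have "dom (mV p) = gV L" "dom (mE p) = gE L"
    using member unfolding is_total_def by auto
  ultimately show ?thesis unfolding unique_preimages_def ran_def by blast
qed

theorem mainTheorem2:
  fixes ar :: "'l::finite \<Rightarrow> nat"
    and L R :: "'l hgraph" and r :: morph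
    and U :: "('l hgraph \<times> morph \<times> 'l hgraph \<times> morph) set"
  assumes "is_urule ar (L, R, r, U)"
    and "(Lb, pi, Rb, gamma) \<in> instantiations ar (L, R, r, U)"
    and "u \<in> U"
    and "oplus_step ar L (Lb, pi, Rb, gamma) u (Lbu, pinew, Rbu, eta)"
  shows "\<exists>mu' mu''. subgraph_morph Lbu Lb mu' \<and> subgraph_morph Rbu Rb mu'' \<and>
           gamma \<circ>\<^sub>m mu' = mu'' \<circ>\<^sub>m eta"
proof -
  obtain Lu p Ru q where u: "u = (Lu, p, Ru, q)" by (cases u) auto
  have "is_graph ar Lb" "is_graph ar Rb" "is_morph L Lb pi" "is_morph Lb Rb gamma"
    using instantiation_wf[OF assms(2,1)] by simp_all
  moreover have "is_morph L Lu p" "is_total L p" "is_injective p" "is_morph Lu Ru q"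
    "unique_preimages (mV q) (ran (mV p))" "unique_preimages (mE q) (ran (mE p))"
    using urule_member[OF assms(1) assms(3)[unfolded u]] by simp_all
  moreover obtain p' pi' alpha beta where
    "is_pushout ar L Lb Lu pi p Lbu p' pi'"
    "is_pushout ar L Rb Ru (gamma \<circ>\<^sub>m pi) (q \<circ>\<^sub>m p) Rbu alpha beta"
    "is_morph Lbu Rbu eta" "eta \<circ>\<^sub>m p' = alpha \<circ>\<^sub>m gamma" "eta \<circ>\<^sub>m pi' = beta \<circ>\<^sub>m q"
    using assms(4) unfolding u oplus_step_def by auto
  ultimately show ?thesis by (rule extension_step_subgraphs)
qed

end
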